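(* Let $U,V$ be $\mathrm{OST}$-monoids and $\alpha:U\to V$ a surjective monotone transmission, and let $\alpha=\rho\circ\mu\circ\beta\circ\lambda$ with $\lambda:U\to\bar U$, $\beta:\bar U\to W$, $\mu:W\to\bar W$, $\rho:\bar W\to V$ be a canonical factorization of $\alpha$. Then the supertropical monoids $\bar U,W,\bar W$ can be equipped with total orderings, in a unique way, such that they become $\mathrm{OST}$-monoids and all factors $\lambda,\beta,\mu,\rho$ are monotone transmissions.
   Context: A supertropical monoid is a commutative monoid $(U,\cdot)$ with absorbing element $0$ and distinguished idempotent $e$ with $ex=0\Rightarrow x=0$, together with a total ordering $\le_M$ on $M:=eU$, compatible with multiplication and with $0$ least, making $M$ a bipotent semiring (addition $=\max$). A transmission $\alpha:U\to V$ is a map with $\alpha(0)=0$, $\alpha(1)=1$, multiplicative, $\alpha(e_U)=e_V$, order-preserving on $eU$; ghost part $\gamma:=\alpha^\nu$ its restriction $eU\to eV$; ghost kernel $\mathfrak A_\alpha:=\{x:\alpha(x)\in eV\}$. An OST-monoid is a supertropical monoid with a total ordering $\le$ on $U$ such that $x\le y\Rightarrow xz\le yz$, $\le$ restricts to $\le_M$ on $M$, and $0\le1\le e$. A transmission between OST-monoids is monotone if $x\le y\Rightarrow\alpha(x)\le\alpha(y)$. Canonical factorization of a surjective transmission $\alpha$ with $N:=eV$: a factorization $\alpha=\rho\circ\mu\circ\beta\circ\lambda$ in which, up to isomorphisms over the ghost ideals, $\lambda=\pi_{E(U,\mathfrak A_\alpha)}:U\to\bar U=U/E(U,\mathfrak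 A_\alpha)$, $\beta=\pi_{F(\bar U,\gamma)}:\bar U\to W=\bar U/F(\bar U,\gamma)$, $\mu=\pi_T:W\to\bar W=W/T$ for a tangible MFCE-relation $T$ on $W$, and $\rho:\bar W\to V$ is an isomorphism of supertropical monoids whose ghost part is $\mathrm{id}_N$. Here quotients by TE-relations carry the unique supertropical monoid structure making the projection a transmission; $E(U,\mathfrak A)$ ($\mathfrak A\supseteq M$ an ideal): $x\sim y$ iff $x=y$ or ($x,y\in\mathfrak A$, $ex=ey$); $F(\bar U,\gamma)$: $x\sim y$ iff $x=y$, or $x,y\in M$ with $\gamma(x)=\gamma(y)$, or $\gamma(ex)=\gamma(ey)=0$ (ghost ideal of quotient identified with $N$); an MFCE-relation is a multiplicative equivalence relation with $x\sim y\Rightarrow ex=ey$, tangible if ghosts are equivalent only to themselves. *)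

theory Defs
  imports Main
begin

text \<open>A supertropical monoid carried by a whole type: multiplication, absorbing 0,
  unit 1, distinguished idempotent e, and the (total) order on the ghost ideal M = eU.\<close>

record 'a stm =
  stm_mul  :: "'a \<Rightarrow> 'a \<Rightarrow> 'a"
  stm_zero :: 'a
  stm_one  :: 'a
  stm_e    :: 'a
  stm_gle  :: "'a \<Rightarrow> 'a \<Rightarrow> bool"

definition ghosts :: "('a, 'z) stm_scheme \<Rightarrow> 'a set" where
  "ghosts S = range (stm_mul S (stm_e S))"

definition supertropical_monoid :: "('a, 'z) stm_scheme \<Rightarrow> bool" where
  "supertropical_monoid S \<longleftrightarrow>
     (let m = stm_mul S; M = ghosts S; le = stm_gle S in
      (\<forall>x y z. m (m x y) z = m x (m y z)) \<and>
      (\<forall>x y. m x y = m y x) \<and>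
      (\<forall>x. m (stm_one S) x = x) \<and>
      (\<forall>x. m (stm_zero S) x = stm_zero S) \<and>
      m (stm_e S) (stm_e S) = stm_e S \<and>
      (\<forall>x. m (stm_e S) x = stm_zero S \<longrightarrow> x = stm_zero S) \<and>
      (\<forall>x\<in>M. le x x) \<and>
      (\<forall>x\<in>M. \<forall>y\<in>M. le x y \<and> le y x \<longrightarrow> x = y) \<and>
      (\<forall>x\<in>M. \<forall>y\<in>M. \<forall>z\<in>M. le x y \<and> le y z \<longrightarrow> le x z) \<and>
      (\<forall>x\<in>M. \<forall>y\<in>M. le x y \<or> le y x) \<and>
      (\<forall>x\<in>M. \<forall>y\<in>M. \<forall>z\<in>M. le x y \<longrightarrow> le (m x z) (m y z)) \<and>
      (\<forall>x\<in>M. le (stm_zero S) x))"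

definition transmission ::
  "('a, 'z) stm_scheme \<Rightarrow> ('b, 'w) stm_scheme \<Rightarrow> ('a \<Rightarrow> 'b) \<Rightarrow> bool" where
  "transmission U V f \<longleftrightarrow>
     f (stm_zero U) = stm_zero V \<and>
     f (stm_one U) = stm_one V \<and>
     (\<forall>x y. f (stm_mul U x y) = stm_mul V (f x) (f y)) \<and>
     f (stm_e U) = stm_e V \<and>
     (\<forall>x\<in>ghosts U. \<forall>y\<in>ghosts U. stm_gle U x y \<longrightarrow> stm_gle V (f x) (f y))"

definition stm_iso ::
  "('a, 'z) stm_scheme \<Rightarrow> ('b, 'w) stm_scheme \<Rightarrow> ('a \<Rightarrow> 'b) \<Rightarrow> bool" where
  "stm_iso U V f \<longleftrightarrow> transmission U V f \<and> bij f \<and> transmission V U (inv f)"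

definition ghost_kernel :: "('b, 'w) stm_scheme \<Rightarrow> ('a \<Rightarrow> 'b) \<Rightarrow> 'a set" where
  "ghost_kernel V f = {x. f x \<in> ghosts V}"

definition ost_monoid :: "('a, 'z) stm_scheme \<Rightarrow> ('a \<Rightarrow> 'a \<Rightarrow> bool) \<Rightarrow> bool" where
  "ost_monoid S le \<longleftrightarrow>
     supertropical_monoid S \<and>
     (\<forall>x. le x x) \<and>
     (\<forall>x y. le x y \<and> le y x \<longrightarrow> x = y) \<and>
     (\<forall>x y z. le x y \<and> le y z \<longrightarrow> le x z) \<and>
     (\<forall>x y. le x y \<or> le y x) \<and>
     (\<forall>x y z. le x y \<longrightarrow> le (stm_mul S x z) (stm_mul S y z)) \<and>
     (\<forall>x\<in>ghosts S. \<forall>y\<in>ghosts S. le x y \<longleftrightarrow> stm_gle S x y) \<and>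
     le (stm_zero S) (stm_one S) \<and>
     le (stm_one S) (stm_e S)"

definition E_rel :: "('a, 'z) stm_scheme \<Rightarrow> 'a set \<Rightarrow> 'a \<Rightarrow> 'a \<Rightarrow> bool" where
  "E_rel U A x y \<longleftrightarrow> x = y \<or> (x \<in> A \<and> y \<in> A \<and> stm_mul U (stm_e U) x = stm_mul U (stm_e U) y)"

text \<open>The equivalence relation F(U,gamma), gamma a map from (the ghost ideal of) U to
  the ghost ideal N of V; 0 is the zero of V.\<close>
definition F_rel :: "('a, 'z) stm_scheme \<Rightarrow> 'n \<Rightarrow> ('a \<Rightarrow> 'n) \<Rightarrow> 'a \<Rightarrow> 'a \<Rightarrow> bool" where
  "F_rel U z0 \<gamma> x y \<longleftrightarrow> x = y \<or>
     (x \<in> ghosts U \<and> y \<in> ghosts U \<and> \<gamma> x = \<gamma> y) \<or>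
     (\<gamma> (stm_mul U (stm_e U) x) = z0 \<and> \<gamma> (stm_mul U (stm_e U) y) = z0)"

definition tangible_MFCE :: "('a, 'z) stm_scheme \<Rightarrow> ('a \<Rightarrow> 'a \<Rightarrow> bool) \<Rightarrow> bool" where
  "tangible_MFCE W T \<longleftrightarrow>
     (\<forall>x. T x x) \<and> (\<forall>x y. T x y \<longrightarrow> T y x) \<and> (\<forall>x y z. T x y \<and> T y z \<longrightarrow> T x z) \<and>
     (\<forall>x y z. T x y \<longrightarrow> T (stm_mul W x z) (stm_mul W y z)) \<and>
     (\<forall>x y. T x y \<longrightarrow> stm_mul W (stm_e W) x = stm_mul W (stm_e W) y) \<and>
     (\<forall>x y. x \<in> ghosts W \<and> T x y \<longrightarrow> x = y)"

text \<open>Canonical factorization of a surjective transmission alpha : U -> V as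
  alpha = rho o mu o beta o lam, each factor described up to isomorphism over the
  ghost ideals, i.e. as a surjective transmission whose fibres are exactly the classes
  of the prescribed equivalence relation (the quotient then carries the unique
  supertropical structure making the projection a transmission).  The map gamma used
  in F is the ghost part of alpha transported to Ubar along lam.\<close>
definition canonical_factorization ::
  "('a, 'z1) stm_scheme \<Rightarrow> ('b, 'z2) stm_scheme \<Rightarrow> ('c, 'z3) stm_scheme \<Rightarrow>
   ('d, 'z4) stm_scheme \<Rightarrow> ('e, 'z5) stm_scheme \<Rightarrow> ('a \<Rightarrow> 'e) \<Rightarrow>
   ('a \<Rightarrow> 'b) \<Rightarrow> ('b \<Rightarrow> 'c) \<Rightarrow> ('c \<Rightarrow> 'd) \<Rightarrow> ('d \<Rightarrow> 'e) \<Rightarrow> bool" where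
  "canonical_factorization U Ub W Wb V \<alpha> lam \<beta> \<mu> \<rho> \<longleftrightarrow>
     supertropical_monoid Ub \<and> supertropical_monoid W \<and> supertropical_monoid Wb \<and>
     (\<forall>x. \<alpha> x = \<rho> (\<mu> (\<beta> (lam x)))) \<and>
     transmission U Ub lam \<and> surj lam \<and>
     (\<forall>x y. lam x = lam y \<longleftrightarrow> E_rel U (ghost_kernel V \<alpha>) x y) \<and>
     transmission Ub W \<beta> \<and> surj \<beta> \<and>
     (\<forall>x y. \<beta> x = \<beta> y \<longleftrightarrow> F_rel Ub (stm_zero V) (\<lambda>u. \<alpha> (inv lam u)) x y) \<and>
     transmission W Wb \<mu> \<and> surj \<mu> \<and>
     (\<exists>T. tangible_MFCE W T \<and> (\<forall>x y. \<mu> x = \<mu> y \<longleftrightarrow> T x y)) \<and>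
     stm_iso Wb V \<rho>"

end

theory Submission
  imports Defs
begin

text \<open>Each of \<open>\<lambda>\<close>, \<open>\<beta>\<close>, \<open>\<mu>\<close> is a surjective transmission whose fibres are convex for the
  order on its source: for \<open>\<lambda>\<close> and \<open>\<beta>\<close> this follows from the explicit descriptions of the
  fibres by \<open>E_rel\<close> and \<open>F_rel\<close> together with monotonicity of \<open>\<alpha>\<close>, for \<open>\<mu>\<close> from the
  injectivity of \<open>\<rho>\<close>.  Pushing a total order along a surjection with convex fibres gives a
  total order, and an OST-order on the image when the surjection is a transmission.  Since a
  monotone surjection onto a totally ordered set determines the order of its image, these
  pushed orders are the only possible ones.\<close>

subsection \<open>Supertropical monoids and transmissions\<close>

lemma stm_mul_assoc:
  "supertropical_monoid S \<Longrightarrow> stm_mul S (stm_mul S x y) z = stm_mul S x (stm_mul S y z)"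
  unfolding supertropical_monoid_def Let_def by metis

lemma stm_mul_commute: "supertropical_monoid S \<Longrightarrow> stm_mul S x y = stm_mul S y x"
  unfolding supertropical_monoid_def Let_def by metis

lemma stm_zero_mul: "supertropical_monoid S \<Longrightarrow> stm_mul S (stm_zero S) x = stm_zero S"
  unfolding supertropical_monoid_def Let_def by metis

lemma stm_e_idem: "supertropical_monoid S \<Longrightarrow> stm_mul S (stm_e S) (stm_e S) = stm_e S"
  unfolding supertropical_monoid_def Let_def by metis

lemma stm_e_mul_eq_zero:
  "supertropical_monoid S \<Longrightarrow> stm_mul S (stm_e S) x = stm_zero S \<Longrightarrow> x = stm_zero S"
  unfolding supertropical_monoid_def Let_def by metis

lemma stm_gle_antisym:
  "supertropical_monoid S \<Longrightarrow> x \<in> ghosts S \<Longrightarrow> y \<in> ghosts S \<Longrightarrow>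
    stm_gle S x y \<Longrightarrow> stm_gle S y x \<Longrightarrow> x = y"
  unfolding supertropical_monoid_def Let_def by metis

lemma e_mul_in_ghosts: "stm_mul S (stm_e S) x \<in> ghosts S"
  unfolding ghosts_def by simp

lemma e_mul_e_mul:
  assumes "supertropical_monoid S"
  shows "stm_mul S (stm_e S) (stm_mul S (stm_e S) x) = stm_mul S (stm_e S) x"
  using stm_mul_assoc[OF assms] stm_e_idem[OF assms] by metis

lemma e_mul_ghost:
  assumes "supertropical_monoid S" "x \<in> ghosts S"
  shows "stm_mul S (stm_e S) x = x"
  using assms e_mul_e_mul[OF assms(1)] unfolding ghosts_def by auto

lemma transmission_ghosts:
  assumes "transmission S T f" "x \<in> ghosts S"
  shows "f x \<in> ghosts T"
proof -
  obtain w where "x = stm_mul S (stm_e S) w"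
    using assms(2) unfolding ghosts_def by auto
  then have "f x = stm_mul T (stm_e T) (f w)"
    using assms(1) unfolding transmission_def by auto
  then show ?thesis
    by (simp add: e_mul_in_ghosts)
qed

lemma transmission_ghost_mono:
  "transmission S T f \<Longrightarrow> x \<in> ghosts S \<Longrightarrow> y \<in> ghosts S \<Longrightarrow> stm_gle S x y \<Longrightarrow>
    stm_gle T (f x) (f y)"
  unfolding transmission_def by blast

lemma transmission_comp:
  assumes "transmission S T f" "transmission T R g"
  shows "transmission S R (g \<circ> f)"
  using assms transmission_ghosts[OF assms(1)] unfolding transmission_def by auto

lemma transmission_e_mul:
  "transmission S T f \<Longrightarrow> f (stm_mul S (stm_e S) x) = stm_mul T (stm_e T) (f x)"
  unfolding transmission_def by auto

lemma ghost_kernel_e_mul: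
  assumes "supertropical_monoid V" "transmission U V \<alpha>" "x \<in> ghost_kernel V \<alpha>"
  shows "\<alpha> (stm_mul U (stm_e U) x) = \<alpha> x"
  using assms e_mul_ghost transmission_e_mul unfolding ghost_kernel_def by fastforce

lemma ost_monoid_supertropical: "ost_monoid S le \<Longrightarrow> supertropical_monoid S"
  unfolding ost_monoid_def by blast

lemma ost_refl: "ost_monoid S le \<Longrightarrow> le x x"
  unfolding ost_monoid_def by blast

lemma ost_antisym: "ost_monoid S le \<Longrightarrow> le x y \<Longrightarrow> le y x \<Longrightarrow> x = y"
  unfolding ost_monoid_def by blast

lemma ost_total: "ost_monoid S le \<Longrightarrow> le x y \<or> le y x"
  unfolding ost_monoid_def by blast

lemma ost_ghost_order:
  "ost_monoid S le \<Longrightarrow> x \<in> ghosts S \<Longrightarrow> y \<in> ghosts S \<Longrightarrow> le x y \<longleftrightarrow> stm_gle S x y"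
  unfolding ost_monoid_def by blast

lemma ost_antisymp: "ost_monoid S le \<Longrightarrow> antisymp le"
  by (auto intro: antisympI ost_antisym)

lemma ost_e_mul_mono:
  assumes "ost_monoid S le" "le x y"
  shows "le (stm_mul S (stm_e S) x) (stm_mul S (stm_e S) y)"
  using assms stm_mul_commute[OF ost_monoid_supertropical[OF assms(1)]]
  unfolding ost_monoid_def by metis

subsection \<open>Pushing a total order along a surjection\<close>

definition push_order :: "('a \<Rightarrow> 'a \<Rightarrow> bool) \<Rightarrow> ('a \<Rightarrow> 'b) \<Rightarrow> 'b \<Rightarrow> 'b \<Rightarrow> bool" where
  "push_order le f u v \<longleftrightarrow> (\<exists>x y. f x = u \<and> f y = v \<and> le x y)"

definition convex_fibres :: "('a \<Rightarrow> 'a \<Rightarrow> bool) \<Rightarrow> ('a \<Rightarrow> 'b) \<Rightarrow> bool" where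
  "convex_fibres le f \<longleftrightarrow> (\<forall>x y z. f x = f y \<longrightarrow> le x z \<longrightarrow> le z y \<longrightarrow> f z = f x)"

lemma convex_fibresD:
  "convex_fibres le f \<Longrightarrow> f x = f y \<Longrightarrow> le x z \<Longrightarrow> le z y \<Longrightarrow> f z = f x"
  unfolding convex_fibres_def by blast

lemma convex_fibres_if_monotone:
  assumes "monotone le le' f" "antisymp le'"
  shows "convex_fibres le f"
  unfolding convex_fibres_def
  using assms by (metis antisympD monotoneD)

lemma convex_fibres_comp_inj:
  "convex_fibres le (g \<circ> f) \<Longrightarrow> inj g \<Longrightarrow> convex_fibres le f"
  unfolding convex_fibres_def comp_def by (metis injD)

lemma monotone_push_order: "monotone le (push_order le f) f"
  unfolding push_order_def by (auto intro: monotoneI)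

lemma monotone_push_orderI:
  "monotone le l (g \<circ> f) \<Longrightarrow> monotone (push_order le f) l g"
  unfolding push_order_def by (auto intro!: monotoneI dest: monotoneD)

lemma push_order_refl:
  "surj f \<Longrightarrow> \<forall>x. le x x \<Longrightarrow> push_order le f u u"
  unfolding push_order_def by (metis surjD)

lemma push_order_total:
  "surj f \<Longrightarrow> \<forall>x y. le x y \<or> le y x \<Longrightarrow> push_order le f u v \<or> push_order le f v u"
  unfolding push_order_def by (metis surjD)

lemma push_order_antisym:
  assumes conv: "convex_fibres le f" and tot: "\<And>x y. le x y \<or> le y x"
    and "push_order le f u v" "push_order le f v u"
  shows "u = v"
proof -
  obtain x y x' y' where "f x = u" "f y = v" "le x y" "f y' = v" "f x' = u" "le y' x'"
    using assms(3,4) unfolding push_order_def by blast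
  with tot[of x' y] convex_fibresD[OF conv] show ?thesis
    by metis
qed

lemma push_order_trans:
  assumes conv: "convex_fibres le f" and tot: "\<And>x y. le x y \<or> le y x"
    and trans: "\<And>x y z. le x y \<Longrightarrow> le y z \<Longrightarrow> le x z"
    and "push_order le f u v" "push_order le f v w"
  shows "push_order le f u w"
proof -
  obtain x y y' z where fx: "f x = u" and fy: "f y = v" and "le x y"
      and fy': "f y' = v" and fz: "f z = w" and "le y' z"
    using assms(4,5) unfolding push_order_def by blast
  consider "le y y'" | "le x z" | "le y' y" "le z x"
    using tot by blast
  then show ?thesis
  proof cases
    case 1
    then show ?thesis
      using fx fz \<open>le x y\<close> \<open>le y' z\<close> trans unfolding push_order_def by blast
  next
    case 2
    then show ?thesis
      using fx fz unfolding push_order_def by blast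
  next
    case 3
    \<comment> \<open>then \<open>y' \<le> z \<le> x \<le> y\<close> lie in one fibre, so \<open>u = w\<close>\<close>
    have "f z = f y'" "f x = f y'"
      using 3 \<open>le x y\<close> \<open>le y' z\<close> fy fy' trans convex_fibresD[OF conv] by metis+
    then show ?thesis
      using fx fz 3 \<open>le y' z\<close> trans unfolding push_order_def by metis
  qed
qed

lemma push_order_mult_mono:
  assumes "transmission S T f" "surj f"
    and mono: "\<forall>x y z. le x y \<longrightarrow> le (stm_mul S x z) (stm_mul S y z)"
    and "push_order le f u v"
  shows "push_order le f (stm_mul T u w) (stm_mul T v w)"
proof -
  obtain x y z where "f x = u" "f y = v" "le x y" "f z = w"
    using assms(2,4) unfolding push_order_def by (metis surjD)
  with mono assms(1) show ?thesis
    unfolding push_order_def transmission_def by metis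
qed

lemma push_order_ghosts:
  assumes ost: "ost_monoid S le" and st: "supertropical_monoid T"
    and tr: "transmission S T f" and "surj f"
    and u: "u \<in> ghosts T" and v: "v \<in> ghosts T"
  shows "push_order le f u v \<longleftrightarrow> stm_gle T u v"
proof -
  have to_gle: "stm_gle T u v"
    if uv: "push_order le f u v" and u: "u \<in> ghosts T" and v: "v \<in> ghosts T" for u v
  proof -
    obtain x y where fx: "f x = u" and fy: "f y = v" and "le x y"
      using uv unfolding push_order_def by blast
    let ?ex = "stm_mul S (stm_e S) x" and ?ey = "stm_mul S (stm_e S) y"
    have "stm_gle S ?ex ?ey"
      using ost_e_mul_mono[OF ost \<open>le x y\<close>] ost_ghost_order[OF ost e_mul_in_ghosts e_mul_in_ghosts]
      by simp
    then have "stm_gle T (f ?ex) (f ?ey)"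
      using transmission_ghost_mono[OF tr e_mul_in_ghosts e_mul_in_ghosts] by blast
    moreover have "f ?ex = u" "f ?ey = v"
      using transmission_e_mul[OF tr] e_mul_ghost[OF st] fx fy u v by simp_all
    ultimately show ?thesis
      by simp
  qed
  show ?thesis
  proof
    show "stm_gle T u v" if "push_order le f u v"
      using that u v by (rule to_gle)
    show "push_order le f u v" if "stm_gle T u v"
    proof (rule ccontr)
      assume "\<not> push_order le f u v"
      then have "push_order le f v u"
        using push_order_total[OF \<open>surj f\<close>] ost_total[OF ost] by blast
      then have "u = v"
        using stm_gle_antisym[OF st u v that] to_gle[OF _ v u] by blast
      then show False
        using \<open>\<not> push_order le f u v\<close> push_order_refl[OF \<open>surj f\<close>] ost_refl[OF ost] by blast
    qed
  qed
qed

lemma push_order_ost_monoid: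
  assumes ost: "ost_monoid S le" and st: "supertropical_monoid T"
    and tr: "transmission S T f" and sj: "surj f" and conv: "convex_fibres le f"
  shows "ost_monoid T (push_order le f)"
proof -
  let ?P = "push_order le f"
  have refl: "\<forall>x. le x x" and tot: "\<forall>x y. le x y \<or> le y x"
    and trans: "\<forall>x y z. le x y \<and> le y z \<longrightarrow> le x z"
    and mono: "\<forall>x y z. le x y \<longrightarrow> le (stm_mul S x z) (stm_mul S y z)"
    and "le (stm_zero S) (stm_one S)" "le (stm_one S) (stm_e S)"
    using ost unfolding ost_monoid_def by blast+
  then have "?P (stm_zero T) (stm_one T)" "?P (stm_one T) (stm_e T)"
    using tr unfolding push_order_def transmission_def by metis+
  moreover have "\<forall>u. ?P u u" "\<forall>u v. ?P u v \<or> ?P v u"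
    using push_order_refl[of f le, OF sj refl] push_order_total[of f le, OF sj tot] by blast+
  moreover have "\<forall>u v. ?P u v \<and> ?P v u \<longrightarrow> u = v"
    using push_order_antisym[OF conv] tot by blast
  moreover have "\<forall>u v w. ?P u v \<and> ?P v w \<longrightarrow> ?P u w"
    using push_order_trans[OF conv] tot trans by blast
  moreover have "\<forall>u v w. ?P u v \<longrightarrow> ?P (stm_mul T u w) (stm_mul T v w)"
    using push_order_mult_mono[OF tr sj mono] by blast
  moreover have "\<forall>u\<in>ghosts T. \<forall>v\<in>ghosts T. ?P u v \<longleftrightarrow> stm_gle T u v"
    using push_order_ghosts[OF ost st tr sj] by blast
  ultimately show ?thesis
    unfolding ost_monoid_def using st by (intro conjI)
qed

lemma push_order_unique:
  assumes "ost_monoid T l" "ost_monoid S le" "surj f" "monotone le l f"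
  shows "l = push_order le f"
proof (intro ext iffI)
  fix u v
  obtain x y where u: "f x = u" and v: "f y = v"
    using \<open>surj f\<close> by (metis surjD)
  show "push_order le f u v" if "l u v"
  proof (cases "le x y")
    case True
    then show ?thesis
      using u v unfolding push_order_def by blast
  next
    case False
    \<comment> \<open>then \<open>y \<le> x\<close>, so also \<open>l v u\<close>, forcing \<open>u = v\<close>\<close>
    then have "u = v"
      using that u v assms(1,2,4) ost_total ost_antisym by (metis monotoneD)
    then show ?thesis
      using push_order_refl[OF \<open>surj f\<close>] ost_refl[OF assms(2)] by blast
  qed
  show "l u v" if "push_order le f u v"
    using that assms(4) unfolding push_order_def by (auto dest: monotoneD)
qed

subsection \<open>Convexity of the fibres of the canonical factors\<close>

lemma convex_fibres_E_rel:
  assumes ostU: "ost_monoid U le" and ostV: "ost_monoid V le'"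
    and tr: "transmission U V \<alpha>" and mono: "monotone le le' \<alpha>"
    and fibres: "\<And>x y. f x = f y \<longleftrightarrow> E_rel U (ghost_kernel V \<alpha>) x y"
  shows "convex_fibres le f"
  unfolding convex_fibres_def
proof (intro allI impI)
  fix x y z
  assume "f x = f y" "le x z" "le z y"
  then consider "x = y"
    | "x \<in> ghost_kernel V \<alpha>" "y \<in> ghost_kernel V \<alpha>"
      "stm_mul U (stm_e U) x = stm_mul U (stm_e U) y"
    using fibres unfolding E_rel_def by blast
  then show "f z = f x"
  proof cases
    case 1
    then show ?thesis
      using \<open>le x z\<close> \<open>le z y\<close> ost_antisym[OF ostU] by blast
  next
    case 2
    have stV: "supertropical_monoid V"
      using ostV by (rule ost_monoid_supertropical)
    have "stm_mul U (stm_e U) z = stm_mul U (stm_e U) x"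
      using 2(3) ost_e_mul_mono[OF ostU] \<open>le x z\<close> \<open>le z y\<close> ost_antisym[OF ostU] by metis
    moreover have "\<alpha> z = \<alpha> x"
    proof -
      have "\<alpha> x = \<alpha> y"
        using 2 ghost_kernel_e_mul[OF stV tr] by metis
      then show ?thesis
        using convex_fibresD[OF convex_fibres_if_monotone[OF mono ost_antisymp[OF ostV]]]
          \<open>le x z\<close> \<open>le z y\<close> by blast
    qed
    then have "z \<in> ghost_kernel V \<alpha>"
      using 2(1) unfolding ghost_kernel_def by simp
    ultimately show ?thesis
      using 2(1) fibres unfolding E_rel_def by metis
  qed
qed

lemma ghost_kernel_E_quotient:
  assumes st: "supertropical_monoid U" and tr: "transmission U V \<alpha>"
    and lam: "transmission U Ub lam" "surj lam"
    and factor: "\<And>x. \<alpha> x = g (lam x)"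
    and fibres: "\<And>x y. lam x = lam y \<longleftrightarrow> E_rel U (ghost_kernel V \<alpha>) x y"
  shows "ghost_kernel V g \<subseteq> ghosts Ub"
proof
  fix u
  assume "u \<in> ghost_kernel V g"
  moreover obtain x where x: "u = lam x"
    using \<open>surj lam\<close> by (metis surjD)
  ultimately have "x \<in> ghost_kernel V \<alpha>"
    unfolding ghost_kernel_def by (simp add: factor)
  moreover have "stm_mul U (stm_e U) x \<in> ghost_kernel V \<alpha>"
    unfolding ghost_kernel_def by (simp add: transmission_e_mul[OF tr] e_mul_in_ghosts)
  ultimately have "lam x = lam (stm_mul U (stm_e U) x)"
    using fibres e_mul_e_mul[OF st] unfolding E_rel_def by metis
  then show "u \<in> ghosts Ub"
    using x transmission_e_mul[OF lam(1)] e_mul_in_ghosts by metis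
qed

lemma convex_fibres_F_rel:
  assumes ostS: "ost_monoid S le" and ostV: "ost_monoid V le'"
    and tr: "transmission S V \<gamma>" and mono: "monotone le le' \<gamma>"
    and kernel: "ghost_kernel V \<gamma> \<subseteq> ghosts S"
    and fibres: "\<And>x y. f x = f y \<longleftrightarrow> F_rel S (stm_zero V) \<gamma> x y"
  shows "convex_fibres le f"
  unfolding convex_fibres_def
proof (intro allI impI)
  fix x y z
  assume "f x = f y" "le x z" "le z y"
  have stV: "supertropical_monoid V"
    using ostV by (rule ost_monoid_supertropical)
  have squeeze: "\<gamma> x = \<gamma> y \<Longrightarrow> \<gamma> z = \<gamma> x"
    using convex_fibres_if_monotone[OF mono ost_antisymp[OF ostV]] \<open>le x z\<close> \<open>le z y\<close>
    by (blast dest: convex_fibresD)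
  consider "x = y"
    | "x \<in> ghosts S" "y \<in> ghosts S" "\<gamma> x = \<gamma> y"
    | "\<gamma> (stm_mul S (stm_e S) x) = stm_zero V" "\<gamma> (stm_mul S (stm_e S) y) = stm_zero V"
    using \<open>f x = f y\<close> fibres unfolding F_rel_def by blast
  then show "f z = f x"
  proof cases
    case 1
    then show ?thesis
      using \<open>le x z\<close> \<open>le z y\<close> ost_antisym[OF ostS] by blast
  next
    case 2
    then have "\<gamma> z \<in> ghosts V"
      using squeeze transmission_ghosts[OF tr] by metis
    then have "z \<in> ghosts S"
      using kernel unfolding ghost_kernel_def by blast
    then show ?thesis
      using 2 squeeze fibres unfolding F_rel_def by metis
  next
    case 3
    have zero_iff: "\<gamma> (stm_mul S (stm_e S) w) = stm_zero V \<longleftrightarrow> \<gamma> w = stm_zero V" for w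
      using transmission_e_mul[OF tr] stm_e_mul_eq_zero[OF stV] stm_zero_mul[OF stV]
        stm_mul_commute[OF stV] by metis
    then have "\<gamma> (stm_mul S (stm_e S) z) = stm_zero V"
      using 3 squeeze by metis
    then show ?thesis
      using 3 fibres unfolding F_rel_def by metis
  qed
qed

lemma canonical_factorization_push_orders:
  assumes ostU: "ost_monoid U leU" and ostV: "ost_monoid V leV"
    and tr: "transmission U V \<alpha>" and mono: "monotone leU leV \<alpha>"
    and cf: "canonical_factorization U Ub W Wb V \<alpha> lam \<beta> \<mu> \<rho>"
  defines "P1 \<equiv> push_order leU lam"
    and "P2 \<equiv> push_order (push_order leU lam) \<beta>"
    and "P3 \<equiv> push_order (push_order (push_order leU lam) \<beta>) \<mu>"
  shows "ost_monoid Ub P1 \<and> ost_monoid W P2 \<and> ost_monoid Wb P3 \<and>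
    monotone leU P1 lam \<and> monotone P1 P2 \<beta> \<and> monotone P2 P3 \<mu> \<and> monotone P3 leV \<rho>"
proof -
  have stUb: "supertropical_monoid Ub" and stW: "supertropical_monoid W"
    and stWb: "supertropical_monoid Wb" and factor: "\<And>x. \<alpha> x = \<rho> (\<mu> (\<beta> (lam x)))"
    and lam: "transmission U Ub lam" "surj lam"
    and lam_fibres: "\<And>x y. lam x = lam y \<longleftrightarrow> E_rel U (ghost_kernel V \<alpha>) x y"
    and \<beta>: "transmission Ub W \<beta>" "surj \<beta>"
    and \<beta>_fibres: "\<And>x y. \<beta> x = \<beta> y \<longleftrightarrow> F_rel Ub (stm_zero V) (\<lambda>u. \<alpha> (inv lam u)) x y"
    and \<mu>: "transmission W Wb \<mu>" "surj \<mu>"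
    and \<rho>: "transmission Wb V \<rho>" "inj \<rho>"
    using cf unfolding canonical_factorization_def stm_iso_def bij_def by blast+
  have \<alpha>_factor: "\<alpha> = \<rho> \<circ> \<mu> \<circ> \<beta> \<circ> lam"
    by (simp add: factor fun_eq_iff)
  have \<gamma>: "(\<lambda>u. \<alpha> (inv lam u)) = \<rho> \<circ> \<mu> \<circ> \<beta>"
    using factor surj_f_inv_f[OF lam(2)] by (simp add: fun_eq_iff)
  have \<gamma>_tr: "transmission Ub V (\<rho> \<circ> \<mu> \<circ> \<beta>)"
    using transmission_comp[OF \<beta>(1) transmission_comp[OF \<mu>(1) \<rho>(1)]] .
  have mono1: "monotone P1 leV (\<rho> \<circ> \<mu> \<circ> \<beta>)"
    unfolding P1_def using mono \<alpha>_factor by (simp add: monotone_push_orderI)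
  then have mono2: "monotone P2 leV (\<rho> \<circ> \<mu>)"
    unfolding P1_def P2_def by (rule monotone_push_orderI)
  then have mono3: "monotone P3 leV \<rho>"
    unfolding P2_def P3_def by (rule monotone_push_orderI)
  have ost1: "ost_monoid Ub P1"
    unfolding P1_def
    using push_order_ost_monoid[OF ostU stUb lam]
      convex_fibres_E_rel[OF ostU ostV tr mono lam_fibres] by blast
  moreover have ost2: "ost_monoid W P2"
  proof -
    have "ghost_kernel V (\<rho> \<circ> \<mu> \<circ> \<beta>) \<subseteq> ghosts Ub"
      using ghost_kernel_E_quotient[OF ost_monoid_supertropical[OF ostU] tr lam _ lam_fibres]
        factor by simp
    then have "convex_fibres P1 \<beta>"
      using convex_fibres_F_rel[OF ost1 ostV \<gamma>_tr mono1] \<beta>_fibres unfolding \<gamma> by blast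
    then show ?thesis
      unfolding P2_def P1_def using push_order_ost_monoid[OF ost1[unfolded P1_def] stW \<beta>] by blast
  qed
  moreover have "ost_monoid Wb P3"
  proof -
    have "convex_fibres P2 \<mu>"
      using convex_fibres_comp_inj convex_fibres_if_monotone[OF mono2 ost_antisymp[OF ostV]] \<rho>(2)
      by blast
    then show ?thesis
      unfolding P3_def P2_def using push_order_ost_monoid[OF ost2[unfolded P2_def] stWb \<mu>] by blast
  qed
  ultimately show ?thesis
    unfolding P1_def P2_def P3_def using mono3[unfolded P3_def P2_def]
    by (simp add: monotone_push_order)
qed

theorem theorem61p14:
  fixes U :: "'a stm" and Ub :: "'b stm" and W :: "'c stm" and Wb :: "'d stm"
    and V :: "'e stm"
    and leU :: "'a \<Rightarrow> 'a \<Rightarrow> bool" and leV :: "'e \<Rightarrow> 'e \<Rightarrow> bool"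
    and \<alpha> :: "'a \<Rightarrow> 'e" and lam :: "'a \<Rightarrow> 'b" and \<beta> :: "'b \<Rightarrow> 'c"
    and \<mu> :: "'c \<Rightarrow> 'd" and \<rho> :: "'d \<Rightarrow> 'e"
  assumes "ost_monoid U leU" and "ost_monoid V leV"
    and "transmission U V \<alpha>" and "surj \<alpha>" and "monotone leU leV \<alpha>"
    and "canonical_factorization U Ub W Wb V \<alpha> lam \<beta> \<mu> \<rho>"
  shows "\<exists>!(leUb, leW, leWb).
           ost_monoid Ub leUb \<and> ost_monoid W leW \<and> ost_monoid Wb leWb \<and>
           monotone leU leUb lam \<and> monotone leUb leW \<beta> \<and>
           monotone leW leWb \<mu> \<and> monotone leWb leV \<rho>"
proof -
  define P1 where "P1 = push_order leU lam"
  define P2 where "P2 = push_order P1 \<beta>"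
  define P3 where "P3 = push_order P2 \<mu>"
  have surjs: "surj lam" "surj \<beta>" "surj \<mu>"
    using assms(6) unfolding canonical_factorization_def by blast+
  show ?thesis
  proof (rule ex1I[of _ "(P1, P2, P3)"]; clarsimp)
    show "ost_monoid Ub P1 \<and> ost_monoid W P2 \<and> ost_monoid Wb P3 \<and>
        monotone leU P1 lam \<and> monotone P1 P2 \<beta> \<and> monotone P2 P3 \<mu> \<and> monotone P3 leV \<rho>"
      unfolding P1_def P2_def P3_def
      using canonical_factorization_push_orders[OF assms(1,2,3,5,6)] .
  next
    fix l1 l2 l3
    assume ost: "ost_monoid Ub l1" "ost_monoid W l2" "ost_monoid Wb l3"
      and mono: "monotone leU l1 lam" "monotone l1 l2 \<beta>" "monotone l2 l3 \<mu>"
    have "l1 = P1"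
      unfolding P1_def using push_order_unique[OF ost(1) assms(1) surjs(1) mono(1)] .
    moreover from this have "l2 = P2"
      unfolding P2_def using push_order_unique[OF ost(2) ost(1) surjs(2) mono(2)] by simp
    moreover from this have "l3 = P3"
      unfolding P3_def using push_order_unique[OF ost(3) ost(2) surjs(3) mono(3)] by simp
    ultimately show "l1 = P1 \<and> l2 = P2 \<and> l3 = P3"
      by blast
  qed
qed

end
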